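(* Let $p$ be a prime. Every $p^\alpha$-periodic map $\mathbb{Z}\to\mathbb{Z}_{p^\beta}$ ($\alpha,\beta\ge1$) is described by a $\mathbb{Z}_{p^\beta}$-polyfract, i.e. $\mathbb{Z}_{p^\beta}\binom{X}{\mathbb{Z}_{p^\alpha}}=\mathbb{Z}_{p^\beta}^{\mathbb{Z}_{p^\alpha}}$. More generally, if $q_1,\dots,q_n\ge p$ are powers of $p$ and $B$ is a finite commutative $p$-group, then every map $\mathbb{Z}_{q_1}\times\cdots\times\mathbb{Z}_{q_n}\to B$ is polyfractal: $$B\binom{X_1,\dots,X_n}{\mathbb{Z}_{q_1}\times\cdots\times\mathbb{Z}_{q_n}}=B^{\mathbb{Z}_{q_1}\times\cdots\times\mathbb{Z}_{q_n}}.$$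
   Context: $\mathbb{Z}_r=\mathbb{Z}/r\mathbb{Z}$; $\binom{X}{\delta}=X(X-1)\cdots(X-\delta+1)/\delta!$, $\binom{X}{0}=1$. For a finitely generated commutative group $B$, a $B$-polyfract in $X_1,\dots,X_n$ is a formal finite sum $P=\sum_{\delta\in\mathbb{N}^n}P_\delta\prod_j\binom{X_j}{\delta_j}$ with $P_\delta\in B$, evaluated at $x\in\mathbb{Z}^n$ by $P(x)=\sum_\delta(\prod_j\binom{x_j}{\delta_j})P_\delta$. Polyfracts are identified with their evaluation maps (which is injective). $B\binom{X_1,\dots,X_n}{\mathbb{Z}_{q_1}\times\cdots\times\mathbb{Z}_{q_n}}$ is the set of $B$-polyfracts whose map on $\mathbb{Z}^n$ is $q_j$-periodic in the $j$-th variable, viewed as maps on $\mathbb{Z}_{q_1}\times\cdots\times\mathbb{Z}_{q_n}$. *)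

theory Defs
  imports Main "HOL-Computational_Algebra.Primes"
begin

definition zsmult :: "int \<Rightarrow> 'b::ab_group_add \<Rightarrow> 'b" where
  "zsmult k b = (if 0 \<le> k then (\<Sum>i<nat k. b) else - (\<Sum>i<nat (- k). b))"

text \<open>Binomial polynomial binom(x, k) = x(x-1)...(x-k+1)/k! on integers (exact division).\<close>
definition ibinom :: "int \<Rightarrow> nat \<Rightarrow> int" where
  "ibinom x k = (\<Prod>i<k. x - int i) div fact k"

definition is_polyfract :: "nat \<Rightarrow> ((nat \<Rightarrow> nat) \<Rightarrow> 'b::ab_group_add) \<Rightarrow> bool" where
  "is_polyfract n P \<longleftrightarrow> finite {\<delta>. P \<delta> \<noteq> 0} \<and> (\<forall>\<delta>. P \<delta> \<noteq> 0 \<longrightarrow> (\<forall>j\<ge>n. \<delta> j = 0))"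

definition polyfract_eval :: "nat \<Rightarrow> ((nat \<Rightarrow> nat) \<Rightarrow> 'b::ab_group_add) \<Rightarrow> (nat \<Rightarrow> int) \<Rightarrow> 'b" where
  "polyfract_eval n P x = (\<Sum>\<delta>\<in>{\<delta>. P \<delta> \<noteq> 0}. zsmult (\<Prod>j<n. ibinom (x j) (\<delta> j)) (P \<delta>))"

end

theory Submission
  imports Defs "HOL.Binomial_Plus" "HOL-Library.Function_Algebras"
begin

text \<open>A map g on the integers is recovered from its forward differences by Newton's formula
  g(x) = sum of binom(x, d) (\<Delta>^d g)(0), a finite sum as soon as the high differences vanish.
  If g is q-periodic with q a power of p, then modulo p the operator \<Delta>^q = (E - 1)^q agrees
  with E^q - 1, which kills g; hence \<Delta>^(j q) g is divisible by p^j, and it vanishes once p^j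
  annihilates the values. The truncated Newton sum then agrees with g on the naturals and has
  vanishing high differences, so it agrees with g everywhere. Several variables are handled one
  at a time, applying this to maps into the group of functions of the remaining variables.\<close>

section \<open>Integer multiples in commutative groups\<close>

definition nsmult :: "nat \<Rightarrow> 'b::ab_group_add \<Rightarrow> 'b" where
  "nsmult m b = (\<Sum>i<m. b)"

lemma nsmult_0 [simp]: "nsmult 0 b = 0"
  by (simp add: nsmult_def)

lemma nsmult_Suc: "nsmult (Suc m) b = nsmult m b + b"
  by (simp add: nsmult_def)

lemma nsmult_add_left: "nsmult (m + n) b = nsmult m b + nsmult n b"
  by (induction n) (simp_all add: nsmult_Suc algebra_simps)

lemma nsmult_mult: "nsmult (m * n) b = nsmult m (nsmult n b)"
  by (induction m) (simp_all add: nsmult_Suc nsmult_add_left algebra_simps)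

lemma nsmult_diff: "nsmult m (a - b) = nsmult m a - nsmult m b"
  by (induction m) (simp_all add: nsmult_Suc algebra_simps)

lemma nsmult_apply: "nsmult m h x = nsmult m (h x)"
  by (induction m) (simp_all add: nsmult_Suc)

lemma sum_const_eq_nsmult: "finite A \<Longrightarrow> (\<Sum>y\<in>A. b) = nsmult (card A) b"
  by (induction A rule: finite_induct) (simp_all add: nsmult_Suc)

text \<open>Translation by b permutes the finite group, so summing over all elements gives |B| b = 0.\<close>
lemma nsmult_card_UNIV:
  fixes b :: "'b::{ab_group_add,finite}"
  shows "nsmult (card (UNIV :: 'b set)) b = 0"
proof -
  have "(\<Sum>y\<in>(UNIV::'b set). y) = (\<Sum>y\<in>UNIV. y + b)"
    by (rule sum.reindex_bij_witness[of _ "\<lambda>y. y + b" "\<lambda>y. y - b"]) auto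
  also have "\<dots> = (\<Sum>y\<in>UNIV. y) + nsmult (card (UNIV :: 'b set)) b"
    by (simp add: sum.distrib sum_const_eq_nsmult)
  finally show ?thesis by simp
qed

lemma zsmult_eq_nsmult: "zsmult k b = nsmult (nat k) b - nsmult (nat (- k)) b"
  by (simp add: zsmult_def nsmult_def)

lemma zsmult_of_nat: "zsmult (int m) b = nsmult m b"
  by (simp add: zsmult_eq_nsmult)

lemma zsmult_diff_of_nat: "zsmult (int a - int b) g = nsmult a g - nsmult b g"
proof (cases "b \<le> a")
  case True
  then obtain c where "a = b + c" using le_Suc_ex by blast
  then show ?thesis by (simp add: zsmult_eq_nsmult nsmult_add_left)
next
  case False
  then obtain c where "b = a + c" by (metis le_Suc_ex nat_le_linear)
  then show ?thesis by (simp add: zsmult_eq_nsmult nsmult_add_left)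
qed

lemma zsmult_add_left: "zsmult (k + l) g = zsmult k g + zsmult l g"
proof -
  obtain a b where k: "k = int a - int b" using int_diff_cases by blast
  obtain c d where l: "l = int c - int d" using int_diff_cases by blast
  have "k + l = int (a + c) - int (b + d)" using k l by simp
  then show ?thesis
    unfolding k l by (simp only: zsmult_diff_of_nat nsmult_add_left) (simp add: algebra_simps)
qed

lemma zsmult_mult: "zsmult (k * l) g = zsmult k (zsmult l g)"
proof -
  obtain a b where k: "k = int a - int b" using int_diff_cases by blast
  obtain c d where l: "l = int c - int d" using int_diff_cases by blast
  have "k * l = int (a * c + b * d) - int (a * d + b * c)"
    unfolding k l by (simp add: algebra_simps)
  then show ?thesis
    unfolding k l
    by (simp only: zsmult_diff_of_nat nsmult_add_left nsmult_mult nsmult_diff) (simp add: algebra_simps)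
qed

lemma zsmult_commute: "zsmult k (zsmult l b) = zsmult l (zsmult k b)"
  by (metis zsmult_mult mult.commute)

lemma zsmult_diff: "zsmult k (a - b) = zsmult k a - zsmult k b"
  by (simp add: zsmult_eq_nsmult nsmult_diff algebra_simps)

lemma zsmult_zero_right [simp]: "zsmult k 0 = 0"
  using zsmult_diff[of k 0 0] by simp

lemma zsmult_zero_left [simp]: "zsmult 0 b = 0"
  by (simp add: zsmult_eq_nsmult)

lemma zsmult_one [simp]: "zsmult 1 b = b"
  by (simp add: zsmult_eq_nsmult nsmult_def)

lemma zsmult_add_right: "zsmult k (a + b) = zsmult k a + zsmult k b"
  using zsmult_diff[of k "a + b" b] by (simp add: algebra_simps)

lemma zsmult_apply: "zsmult k h x = zsmult k (h x)"
  by (simp add: zsmult_eq_nsmult nsmult_apply)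

lemma zsmult_sum_right: "zsmult k (\<Sum>i\<in>A. f i) = (\<Sum>i\<in>A. zsmult k (f i))"
  by (induction A rule: infinite_finite_induct) (simp_all add: zsmult_add_right)

lemma zsmult_int: "zsmult k (b::int) = k * b"
proof -
  have "nsmult m b = int m * b" for m
    by (induction m) (simp_all add: nsmult_Suc algebra_simps)
  then show ?thesis by (simp add: zsmult_eq_nsmult algebra_simps)
qed

lemma ibinom_0 [simp]: "ibinom x 0 = 1"
  by (simp add: ibinom_def)

lemma ibinom_Suc_Suc: "ibinom (x + 1) (Suc k) = ibinom x k + ibinom x (Suc k)"
  using gbinomial_int_Suc_Suc[of x k] by (simp add: ibinom_def gbinomial_prod_rev atLeast0LessThan)

lemma ibinom_of_nat: "ibinom (int m) k = int (m choose k)"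
  using int_binomial[of m k] by (simp add: ibinom_def gbinomial_prod_rev atLeast0LessThan)

lemma prime_dvd_choose_prime_power:
  assumes "prime (p::nat)" "0 < i" "i < p ^ e"
  shows "p dvd (p ^ e choose i)"
proof (rule ccontr)
  assume nd: "\<not> p dvd (p ^ e choose i)"
  obtain m where m: "p ^ e = Suc m" using assms by (cases "p ^ e") auto
  obtain j where j: "i = Suc j" using assms by (cases i) auto
  have "Suc m * (m choose j) = (Suc m choose Suc j) * Suc j" by (rule Suc_times_binomial_eq)
  then have "p ^ e dvd (p ^ e choose i) * i" using m j by (metis dvd_triv_left)
  moreover have "coprime (p ^ e) (p ^ e choose i)"
    using nd assms(1) by (simp add: prime_imp_coprime coprime_commute)
  ultimately have "p ^ e dvd i" by (simp add: coprime_dvd_mult_right_iff)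
  then show False using assms by (meson dvd_imp_le not_le)
qed

section \<open>Forward differences and Newton interpolation\<close>

fun fwd_diff :: "nat \<Rightarrow> (int \<Rightarrow> 'b::ab_group_add) \<Rightarrow> int \<Rightarrow> 'b" where
  "fwd_diff 0 g = g"
| "fwd_diff (Suc k) g = fwd_diff k (\<lambda>x. g (x + 1) - g x)"

definition newton_interp :: "nat \<Rightarrow> (int \<Rightarrow> 'b::ab_group_add) \<Rightarrow> int \<Rightarrow> 'b" where
  "newton_interp N g x = (\<Sum>\<delta><N. zsmult (ibinom x \<delta>) (fwd_diff \<delta> g 0))"

lemma fwd_diff_Suc_outer: "fwd_diff (Suc k) g x = fwd_diff k g (x + 1) - fwd_diff k g x"
proof (induction k arbitrary: g x)
  case (Suc k)
  then show ?case by (metis fwd_diff.simps(2))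
qed simp

lemma fwd_diff_add: "fwd_diff (k + i) g = fwd_diff k (fwd_diff i g)"
  by (induction k) (simp_all add: fwd_diff_Suc_outer [abs_def])

lemma fwd_diff_diff: "fwd_diff k (\<lambda>x. a x - b x) y = fwd_diff k a y - fwd_diff k b y"
  by (induction k arbitrary: y) (simp_all del: fwd_diff.simps(2) add: fwd_diff_Suc_outer algebra_simps)

lemma fwd_diff_zsmult: "fwd_diff k (\<lambda>x. zsmult c (a x)) y = zsmult c (fwd_diff k a y)"
  by (induction k arbitrary: y) (simp_all del: fwd_diff.simps(2) add: fwd_diff_Suc_outer zsmult_diff)

lemma fwd_diff_sum: "fwd_diff k (\<lambda>x. \<Sum>i\<in>A. h i x) y = (\<Sum>i\<in>A. fwd_diff k (h i) y)"
  by (induction k arbitrary: y) (simp_all del: fwd_diff.simps(2) add: fwd_diff_Suc_outer sum_subtractf)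

lemma fwd_diff_shift: "fwd_diff k (\<lambda>t. g (t + c)) y = fwd_diff k g (y + c)"
  by (induction k arbitrary: y) (simp_all del: fwd_diff.simps(2) add: fwd_diff_Suc_outer algebra_simps)

lemma newton_interp_Suc_shift:
  "newton_interp (Suc N) g (x + 1) = newton_interp (Suc N) g x + newton_interp N (\<lambda>t. g (t + 1) - g t) x"
  unfolding newton_interp_def
  by (simp only: sum.lessThan_Suc_shift ibinom_Suc_Suc zsmult_add_left sum.distrib fwd_diff.simps ibinom_0)
     (simp add: algebra_simps)

lemma newton_interp_of_nat: "m < N \<Longrightarrow> newton_interp N g (int m) = g (int m)"
proof (induction m arbitrary: g N)
  case 0
  then obtain N' where N: "N = Suc N'" by (cases N) auto
  have "ibinom 0 (Suc d) = 0" for d using ibinom_of_nat[of 0 "Suc d"] by simp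
  then show ?case unfolding N newton_interp_def by (simp only: sum.lessThan_Suc_shift) simp
next
  case (Suc m)
  then obtain N' where N: "N = Suc N'" "m < N'" by (cases N) auto
  have "newton_interp N g (int (Suc m)) = newton_interp (Suc N') g (int m + 1)"
    using N by (simp add: add.commute)
  also have "\<dots> = newton_interp (Suc N') g (int m) + newton_interp N' (\<lambda>t. g (t + 1) - g t) (int m)"
    by (rule newton_interp_Suc_shift)
  also have "\<dots> = g (int m) + (g (int m + 1) - g (int m))"
    using Suc.IH[of "Suc N'" g] Suc.IH[of N' "\<lambda>t. g (t + 1) - g t"] N by simp
  finally show ?case by (simp add: add.commute)
qed

lemma shift_eq_sum_fwd_diff:
  "g (x + int m) = (\<Sum>\<delta>\<le>m. zsmult (int (m choose \<delta>)) (fwd_diff \<delta> g x))"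
proof -
  have "g (x + int m) = newton_interp (Suc m) (\<lambda>t. g (t + x)) (int m)"
    using newton_interp_of_nat[of m "Suc m" "\<lambda>t. g (t + x)"] by (simp add: add.commute)
  then show ?thesis by (simp add: newton_interp_def fwd_diff_shift ibinom_of_nat lessThan_Suc_atMost)
qed

lemma fwd_diff_newton_interp:
  "fwd_diff k (newton_interp (K + k) g) y = newton_interp K (fwd_diff k g) y"
proof (induction k arbitrary: g)
  case 0 then show ?case by simp
next
  case (Suc k)
  have "(\<lambda>x. newton_interp (Suc (K + k)) g (x + 1) - newton_interp (Suc (K + k)) g x)
      = newton_interp (K + k) (\<lambda>t. g (t + 1) - g t)"
    by (simp add: newton_interp_Suc_shift)
  then show ?case using Suc by simp
qed

lemma fwd_diff_eq_period_diff:
  assumes "0 < q"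
  shows "fwd_diff q g y = (g (y + int q) - g y) - (\<Sum>i\<in>{1..<q}. zsmult (int (q choose i)) (fwd_diff i g y))"
proof -
  have "g (y + int q) = (\<Sum>i\<le>q. zsmult (int (q choose i)) (fwd_diff i g y))"
    by (rule shift_eq_sum_fwd_diff)
  also have "\<dots> = g y + (\<Sum>i\<in>{1..<q}. zsmult (int (q choose i)) (fwd_diff i g y)) + fwd_diff q g y"
    using assms
    by (simp add: atMost_atLeast0 sum.atLeast_Suc_atMost sum.atLeast_Suc_lessThan
        atLeastLessThanSuc_atLeastAtMost[symmetric] del: atLeastLessThanSuc_atLeastAtMost)
  finally show ?thesis by (simp add: algebra_simps)
qed

section \<open>Differences of periodic maps modulo a subgroup\<close>

locale add_subgroup =
  fixes S :: "'b::ab_group_add set"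
  assumes zero_mem: "0 \<in> S"
    and diff_mem: "a \<in> S \<Longrightarrow> b \<in> S \<Longrightarrow> a - b \<in> S"
begin

lemma uminus_mem: "a \<in> S \<Longrightarrow> - a \<in> S"
  using diff_mem[OF zero_mem] by simp

lemma add_mem: "a \<in> S \<Longrightarrow> b \<in> S \<Longrightarrow> a + b \<in> S"
  using diff_mem[OF _ uminus_mem] by fastforce

lemma zsmult_mem: "a \<in> S \<Longrightarrow> zsmult k a \<in> S"
proof -
  assume a: "a \<in> S"
  have "nsmult m a \<in> S" for m
    by (induction m) (simp_all add: nsmult_Suc zero_mem add_mem a)
  then show ?thesis by (simp add: zsmult_eq_nsmult diff_mem)
qed

lemma sum_mem: "(\<And>i. i \<in> A \<Longrightarrow> f i \<in> S) \<Longrightarrow> (\<Sum>i\<in>A. f i) \<in> S"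
  by (induction A rule: infinite_finite_induct) (simp_all add: zero_mem add_mem)

lemma fwd_diff_mem: "(\<And>x. g x \<in> S) \<Longrightarrow> fwd_diff k g y \<in> S"
  by (induction k arbitrary: y) (simp_all del: fwd_diff.simps(2) add: fwd_diff_Suc_outer diff_mem)

lemma add_subgroup_add_multiples: "add_subgroup {b. \<exists>c. b - zsmult m c \<in> S}"
proof
  show "0 \<in> {b. \<exists>c. b - zsmult m c \<in> S}"
    using zero_mem by (auto intro: exI[of _ 0])
next
  fix a b assume "a \<in> {b. \<exists>c. b - zsmult m c \<in> S}" "b \<in> {b. \<exists>c. b - zsmult m c \<in> S}"
  then obtain c d where "a - zsmult m c \<in> S" "b - zsmult m d \<in> S" by blast
  then have "(a - b) - zsmult m (c - d) \<in> S"
    using diff_mem by (fastforce simp: zsmult_diff algebra_simps)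
  then show "a - b \<in> {b. \<exists>c. b - zsmult m c \<in> S}" by blast
qed

text \<open>Descend one difference at a time; D(x + 1) - D(x) \<in> S carries membership from the
  naturals down to the negative integers.\<close>
lemma mem_if_fwd_diff_mem:
  assumes "\<And>y. fwd_diff k D y \<in> S" and "\<And>y. y \<ge> 0 \<Longrightarrow> D y \<in> S"
  shows "D y \<in> S"
  using assms
proof (induction k arbitrary: D y)
  case 0 then show ?case by simp
next
  case (Suc k)
  have step: "D (x + 1) - D x \<in> S" for x
    by (rule Suc.IH) (use Suc.prems diff_mem in simp_all)
  have neg: "D (- int n) \<in> S" for n
  proof (induction n)
    case 0 then show ?case using Suc.prems by simp
  next
    case (Suc n)
    have "D (- int (Suc n)) = D (- int n) - (D (- int (Suc n) + 1) - D (- int (Suc n)))" by simp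
    then show ?case using diff_mem[OF Suc step[of "- int (Suc n)"]] by simp
  qed
  show ?case
  proof (cases "y \<ge> 0")
    case False
    then have "y = - int (nat (- y))" by simp
    then show ?thesis using neg by metis
  qed (use Suc.prems in blast)
qed

text \<open>Invariant: the k-th differences lie in T j = S + p^j B for k \<ge> j q. Each further block of
  q differences gains a factor p, because p divides the inner binomial coefficients of q.\<close>
lemma fwd_diff_mem_if_periodic:
  assumes p: "prime p" and q: "q = p ^ e"
    and per: "\<And>x. g (x + int q) - g x \<in> S"
    and tor: "\<And>c. zsmult (int p ^ \<beta>) c \<in> S"
    and k: "\<beta> * q \<le> k"
  shows "fwd_diff k g x \<in> S"
proof -
  define T where "T j = {b. \<exists>c. b - zsmult (int p ^ j) c \<in> S}" for j
  have T: "add_subgroup (T j)" for j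
    unfolding T_def by (rule add_subgroup_add_multiples)
  have S_T: "b \<in> T j" if "b \<in> S" for b j
    unfolding T_def using that by (auto intro: exI[of _ 0])
  have T_Suc: "zsmult (int p * r) b \<in> T (Suc j)" if b: "b \<in> T j" for b j r
  proof -
    obtain c where c: "b - zsmult (int p ^ j) c \<in> S" using b unfolding T_def by blast
    have "zsmult (int p * r) b - zsmult (int p ^ Suc j) (zsmult r c)
        = zsmult (int p * r) (b - zsmult (int p ^ j) c)"
      by (simp add: zsmult_diff flip: zsmult_mult) (simp add: algebra_simps)
    then show ?thesis unfolding T_def using zsmult_mem[OF c] by (metis (mono_tags) mem_Collect_eq)
  qed
  have T_\<beta>: "b \<in> S" if b: "b \<in> T \<beta>" for b
  proof -
    obtain c where "b - zsmult (int p ^ \<beta>) c \<in> S" using b unfolding T_def by blast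
    then show ?thesis using add_mem[OF _ tor] by (metis diff_add_cancel)
  qed
  have "fwd_diff k g x \<in> T j" if "j * q \<le> k" for j k x
    using that
  proof (induction j arbitrary: k x)
    case 0
    then show ?case unfolding T_def by (auto intro: exI[of _ "fwd_diff k g x"] simp: zero_mem)
  next
    case (Suc j)
    define k' where "k' = k - q"
    have k': "k = k' + q" "j * q \<le> k'" using Suc.prems k'_def by auto
    have "0 < q" using q p by (simp add: prime_gt_0_nat)
    then have "fwd_diff q g = (\<lambda>y. (g (y + int q) - g y)
        - (\<Sum>i\<in>{1..<q}. zsmult (int (q choose i)) (fwd_diff i g y)))"
      using fwd_diff_eq_period_diff by blast
    then have eq: "fwd_diff k g x = fwd_diff k' (\<lambda>y. g (y + int q) - g y) x
        - (\<Sum>i\<in>{1..<q}. zsmult (int (q choose i)) (fwd_diff (k' + i) g x))"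
      unfolding k'(1) fwd_diff_add by (simp add: fwd_diff_diff fwd_diff_sum fwd_diff_zsmult fwd_diff_add)
    have "fwd_diff k' (\<lambda>y. g (y + int q) - g y) x \<in> T (Suc j)"
      by (rule S_T, rule fwd_diff_mem, rule per)
    moreover have "(\<Sum>i\<in>{1..<q}. zsmult (int (q choose i)) (fwd_diff (k' + i) g x)) \<in> T (Suc j)"
    proof (rule add_subgroup.sum_mem[OF T])
      fix i assume i: "i \<in> {1..<q}"
      have "p dvd (q choose i)"
        using prime_dvd_choose_prime_power[OF p] q i by simp
      then obtain r where r: "q choose i = p * r" by (elim dvdE)
      have "fwd_diff (k' + i) g x \<in> T j" using Suc.IH k'(2) by simp
      then have "zsmult (int p * int r) (fwd_diff (k' + i) g x) \<in> T (Suc j)" by (rule T_Suc)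
      then show "zsmult (int (q choose i)) (fwd_diff (k' + i) g x) \<in> T (Suc j)" by (simp add: r)
    qed
    ultimately show ?case unfolding eq by (rule add_subgroup.diff_mem[OF T])
  qed
  then show ?thesis using T_\<beta> k by blast
qed

lemma newton_interp_mem_if_periodic:
  assumes p: "prime p" and q: "q = p ^ e"
    and per: "\<And>x. g (x + int q) - g x \<in> S"
    and tor: "\<And>c. zsmult (int p ^ \<beta>) c \<in> S"
  shows "newton_interp (\<beta> * q) g x - g x \<in> S"
proof -
  define N where "N = \<beta> * q"
  have high: "fwd_diff k g y \<in> S" if "N \<le> k" for k y
    using fwd_diff_mem_if_periodic[where g = g, OF p q per tor] that N_def by blast
  have extend: "newton_interp (N + d) g y - newton_interp N g y \<in> S" for d y
  proof (induction d)
    case (Suc d)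
    have eq: "newton_interp (N + Suc d) g y - newton_interp N g y
        = (newton_interp (N + d) g y - newton_interp N g y) + zsmult (ibinom y (N + d)) (fwd_diff (N + d) g 0)"
      by (simp add: newton_interp_def)
    show ?case unfolding eq by (rule add_mem[OF Suc zsmult_mem[OF high[OF le_add1]]])
  qed (simp add: zero_mem)
  define D where "D y = newton_interp N g y - g y" for y
  have "D y \<in> S" if "0 \<le> y" for y
  proof -
    obtain m where m: "y = int m" using \<open>0 \<le> y\<close> nonneg_eq_int by blast
    have "newton_interp (N + Suc m) g y = g y" using newton_interp_of_nat[of m "N + Suc m" g] m by simp
    then have "D y = - (newton_interp (N + Suc m) g y - newton_interp N g y)" by (simp add: D_def)
    then show ?thesis using uminus_mem[OF extend[of "Suc m" y]] by simp
  qed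
  moreover have "fwd_diff N D y \<in> S" for y
  proof -
    have "fwd_diff N D y = fwd_diff N (newton_interp (0 + N) g) y - fwd_diff N g y"
      unfolding D_def by (simp add: fwd_diff_diff)
    also have "\<dots> = - fwd_diff N g y"
      by (simp only: fwd_diff_newton_interp) (simp add: newton_interp_def)
    finally show ?thesis using uminus_mem[OF high] by simp
  qed
  ultimately have "D x \<in> S" by (rule mem_if_fwd_diff_mem[rotated])
  then show ?thesis by (simp add: D_def N_def)
qed

end

section \<open>Periodic maps are polyfracts\<close>

lemma sum_apply_fun: "(\<Sum>i\<in>A. f i) x = (\<Sum>i\<in>A. f i x)"
  by (induction A rule: infinite_finite_induct) simp_all

lemma polyfract_eval_superset:
  "finite D \<Longrightarrow> {\<delta>. P \<delta> \<noteq> 0} \<subseteq> D \<Longrightarrow>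
   polyfract_eval n P x = (\<Sum>\<delta>\<in>D. zsmult (\<Prod>j<n. ibinom (x j) (\<delta> j)) (P \<delta>))"
  unfolding polyfract_eval_def by (rule sum.mono_neutral_left) auto

lemma polyfract_const: "\<exists>P. is_polyfract 0 P \<and> (\<forall>x. polyfract_eval 0 P x = b)"
proof (intro exI conjI allI)
  define P :: "(nat \<Rightarrow> nat) \<Rightarrow> 'a" where "P \<delta> = (if \<delta> = (\<lambda>_. 0) then b else 0)" for \<delta>
  have sup: "{\<delta>. P \<delta> \<noteq> 0} \<subseteq> {\<lambda>_. 0}" by (auto simp: P_def)
  then show "is_polyfract 0 P"
    unfolding is_polyfract_def using finite_subset by (auto simp: P_def)
  show "polyfract_eval 0 P x = b" for x
    using polyfract_eval_superset[OF _ sup, of 0 x] by simp (simp add: P_def)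
qed

text \<open>The coefficient of binom(X_n, k) binom(X, e) is stored at the multi-index e(n := k).\<close>
lemma polyfract_extend:
  assumes Pf: "\<And>k. k < N \<Longrightarrow> is_polyfract n (Pf k)"
  shows "\<exists>P. is_polyfract (Suc n) P \<and>
    (\<forall>x. polyfract_eval (Suc n) P x = (\<Sum>k<N. zsmult (ibinom (x n) k) (polyfract_eval n (Pf k) x)))"
proof -
  define A where "A k = {e. Pf k e \<noteq> 0}" for k
  have finA: "finite (A k)" if "k < N" for k
    using Pf[OF that] unfolding is_polyfract_def A_def by blast
  have zA: "e j = 0" if "e \<in> A k" "k < N" "n \<le> j" for e k j
    using Pf that unfolding is_polyfract_def A_def by blast
  define P where "P d = (if d n < N then Pf (d n) (d(n := 0)) else 0)" for d
  define U where "U = (\<Union>k\<in>{..<N}. (\<lambda>e. e(n := k)) ` A k)"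
  have finU: "finite U" unfolding U_def using finA by blast
  have supU: "{d. P d \<noteq> 0} \<subseteq> U"
  proof
    fix d assume "d \<in> {d. P d \<noteq> 0}"
    then have d: "d n < N" "d(n := 0) \<in> A (d n)" by (auto simp: P_def A_def split: if_splits)
    moreover have "d = (d(n := 0))(n := d n)" by simp
    ultimately show "d \<in> U" unfolding U_def by blast
  qed
  have "is_polyfract (Suc n) P"
    unfolding is_polyfract_def
  proof (intro conjI allI impI)
    show "finite {\<delta>. P \<delta> \<noteq> 0}" using finU supU finite_subset by blast
  next
    fix d j assume "P d \<noteq> 0" and j: "Suc n \<le> j"
    then have "d(n := 0) \<in> A (d n)" "d n < N" by (auto simp: P_def A_def split: if_splits)
    then show "d j = 0" using zA[of "d(n := 0)" "d n" j] j by simp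
  qed
  moreover have "polyfract_eval (Suc n) P x = (\<Sum>k<N. zsmult (ibinom (x n) k) (polyfract_eval n (Pf k) x))"
    for x
  proof -
    define T where "T d = zsmult (\<Prod>j<Suc n. ibinom (x j) (d j)) (P d)" for d
    have inj: "inj_on (\<lambda>e. e(n := k)) (A k)" if "k < N" for k
      using zA[OF _ that] by (intro inj_onI) (metis fun_upd_triv fun_upd_upd order_refl)
    have T_upd: "T (e(n := k)) = zsmult (ibinom (x n) k) (zsmult (\<Prod>j<n. ibinom (x j) (e j)) (Pf k e))"
      if "e \<in> A k" "k < N" for e k
    proof -
      have "P (e(n := k)) = Pf k e" using that zA[OF that] by (simp add: P_def fun_upd_idem)
      moreover have "(\<Prod>j<Suc n. ibinom (x j) ((e(n := k)) j)) = ibinom (x n) k * (\<Prod>j<n. ibinom (x j) (e j))"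
        by (simp add: mult.commute)
      ultimately show ?thesis unfolding T_def by (simp add: zsmult_mult zsmult_commute)
    qed
    have "polyfract_eval (Suc n) P x = (\<Sum>d\<in>U. T d)"
      unfolding T_def by (rule polyfract_eval_superset[OF finU supU])
    also have "\<dots> = (\<Sum>k<N. \<Sum>d\<in>(\<lambda>e. e(n := k)) ` A k. T d)"
      unfolding U_def
    proof (rule sum.UNION_disjoint)
      show "\<forall>i\<in>{..<N}. \<forall>j\<in>{..<N}. i \<noteq> j \<longrightarrow> (\<lambda>e. e(n := i)) ` A i \<inter> (\<lambda>e. e(n := j)) ` A j = {}"
        by (auto simp: fun_eq_iff) (metis fun_upd_same)
    qed (use finA in auto)
    also have "\<dots> = (\<Sum>k<N. \<Sum>e\<in>A k. T (e(n := k)))"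
      by (rule sum.cong[OF refl]) (simp add: sum.reindex[OF inj] comp_def)
    also have "\<dots> = (\<Sum>k<N. zsmult (ibinom (x n) k) (polyfract_eval n (Pf k) x))"
      by (rule sum.cong[OF refl]) (simp add: T_upd zsmult_sum_right polyfract_eval_def A_def)
    finally show ?thesis .
  qed
  ultimately show ?thesis by blast
qed

text \<open>Maps on Z^n are encoded on nat \<Rightarrow> int; the second clause says that the coordinates
  from n on are ignored.\<close>
definition coord_periodic :: "nat \<Rightarrow> (nat \<Rightarrow> nat) \<Rightarrow> ((nat \<Rightarrow> int) \<Rightarrow> 'b) \<Rightarrow> bool" where
  "coord_periodic n q h \<longleftrightarrow>
     (\<forall>x j. j < n \<longrightarrow> h (x(j := x j + int (q j))) = h x) \<and> (\<forall>x y. (\<forall>j<n. x j = y j) \<longrightarrow> h x = h y)"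

lemma coord_periodic_diff:
  "coord_periodic n q a \<Longrightarrow> coord_periodic n q b \<Longrightarrow> coord_periodic n q (\<lambda>x. a x - b x :: 'b::ab_group_add)"
  unfolding coord_periodic_def by metis

lemma coord_periodic_fwd_diff:
  assumes "\<And>t. coord_periodic n q (G t)"
  shows "coord_periodic n q (fwd_diff k G s :: _ \<Rightarrow> 'b::ab_group_add)"
  using assms
proof (induction k arbitrary: G s)
  case (Suc k)
  have "fwd_diff (Suc k) G s = (\<lambda>x. fwd_diff k G (s + 1) x - fwd_diff k G s x)"
    by (simp only: fwd_diff_Suc_outer) (simp add: fun_diff_def)
  then show ?case using coord_periodic_diff[OF Suc.IH Suc.IH] Suc.prems by metis
qed simp

lemma add_subgroup_zero: "add_subgroup {0}"
  by unfold_locales auto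

text \<open>Induction on the number of variables: the sections t \<mapsto> F(x(n := t)) form one
  q_n-periodic function into the group of maps, which equals its Newton interpolant; its
  Newton coefficients are periodic in the remaining variables.\<close>
lemma coord_periodic_is_polyfract:
  fixes F :: "(nat \<Rightarrow> int) \<Rightarrow> 'b::ab_group_add"
  assumes p: "prime p" and tor: "\<And>b::'b. zsmult (int p ^ \<beta>) b = 0"
    and q: "\<And>j. j < n \<Longrightarrow> \<exists>e. q j = p ^ e"
    and F: "coord_periodic n q F"
  shows "\<exists>P. is_polyfract n P \<and> (\<forall>x. polyfract_eval n P x = F x)"
  using q F
proof (induction n arbitrary: F)
  case 0
  then have const: "F (\<lambda>_. 0) = F x" for x unfolding coord_periodic_def by blast
  obtain P where P: "is_polyfract 0 P" "\<And>x. polyfract_eval 0 P x = F (\<lambda>_. 0)"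
    using polyfract_const by blast
  show ?case
    by (rule exI[of _ P]) (simp add: P const)
next
  case (Suc n)
  obtain e where e: "q n = p ^ e" using Suc.prems(1) by blast
  define g where "g t = (\<lambda>x. F (x(n := t)))" for t
  define N where "N = \<beta> * q n"
  have perF: "F (x(j := x j + int (q j))) = F x" if "j < Suc n" for x j
    using Suc.prems(2) that unfolding coord_periodic_def by blast
  have locF: "F x = F y" if "\<forall>j<Suc n. x j = y j" for x y
    using Suc.prems(2) that unfolding coord_periodic_def by blast
  have per: "g (t + int (q n)) - g t \<in> {0}" for t
    using perF[of n "x(n := t)" for x] by (simp add: g_def fun_eq_iff)
  have tor_fun: "zsmult (int p ^ \<beta>) h \<in> {0}" for h :: "(nat \<Rightarrow> int) \<Rightarrow> 'b"
    by (simp add: fun_eq_iff zsmult_apply tor)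
  have newton: "newton_interp N g t = g t" for t
    using add_subgroup.newton_interp_mem_if_periodic[where g = g, OF add_subgroup_zero p e per tor_fun]
    by (simp add: N_def)
  have "coord_periodic n q (g t)" for t
    unfolding coord_periodic_def
  proof (intro conjI allI impI)
    fix x j assume j: "j < n"
    have "(x(j := x j + int (q j)))(n := t) = (x(n := t))(j := (x(n := t)) j + int (q j))"
      using j by (auto simp: fun_eq_iff)
    then show "g t (x(j := x j + int (q j))) = g t x"
      using perF[of j "x(n := t)"] j by (simp add: g_def)
  next
    fix x y :: "nat \<Rightarrow> int" assume "\<forall>j<n. x j = y j"
    then show "g t x = g t y" unfolding g_def by (intro locF) auto
  qed
  then have "coord_periodic n q (fwd_diff k g 0)" for k
    by (rule coord_periodic_fwd_diff)
  moreover have "\<And>j. j < n \<Longrightarrow> \<exists>e. q j = p ^ e" using Suc.prems(1) by simp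
  ultimately have "\<forall>k. \<exists>P. is_polyfract n P \<and> (\<forall>x. polyfract_eval n P x = fwd_diff k g 0 x)"
    using Suc.IH by blast
  then obtain Pf where Pf: "\<And>k. is_polyfract n (Pf k)" "\<And>k x. polyfract_eval n (Pf k) x = fwd_diff k g 0 x"
    by metis
  obtain P where P: "is_polyfract (Suc n) P"
    "\<And>x. polyfract_eval (Suc n) P x = (\<Sum>k<N. zsmult (ibinom (x n) k) (polyfract_eval n (Pf k) x))"
    using polyfract_extend[of N n Pf] Pf(1) by blast
  have "polyfract_eval (Suc n) P x = F x" for x
  proof -
    have "polyfract_eval (Suc n) P x = newton_interp N g (x n) x"
      by (simp add: P(2) Pf(2) newton_interp_def sum_apply_fun zsmult_apply)
    then show ?thesis by (simp add: newton g_def)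
  qed
  with P(1) show ?case by blast
qed

lemma newton_interp_mod_prime_power:
  fixes f :: "int \<Rightarrow> int"
  assumes p: "prime p" and per: "\<And>x. f (x + int p ^ \<alpha>) mod int p ^ \<beta> = f x mod int p ^ \<beta>"
  shows "(\<Sum>\<delta><\<beta> * p ^ \<alpha>. fwd_diff \<delta> f 0 * ibinom x \<delta>) mod int p ^ \<beta> = f x mod int p ^ \<beta>"
proof -
  interpret add_subgroup "{y. int p ^ \<beta> dvd y}"
    by unfold_locales auto
  have "newton_interp (\<beta> * p ^ \<alpha>) f x - f x \<in> {y. int p ^ \<beta> dvd y}"
    by (rule newton_interp_mem_if_periodic[OF p refl])
       (use per in \<open>simp_all add: mod_eq_dvd_iff zsmult_int\<close>)
  then show ?thesis by (simp add: newton_interp_def zsmult_int mod_eq_dvd_iff mult.commute)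
qed

lemma finite_p_group_map_is_polyfract:
  fixes f :: "(nat \<Rightarrow> int) \<Rightarrow> 'b::{ab_group_add,finite}"
  assumes p: "prime p" and card: "card (UNIV :: 'b set) = p ^ k"
    and q: "\<And>j. j < n \<Longrightarrow> \<exists>e. q j = p ^ e"
  shows "\<exists>P. is_polyfract n P
    \<and> (\<forall>x j. j < n \<longrightarrow> polyfract_eval n P (x(j := x j + int (q j))) = polyfract_eval n P x)
    \<and> (\<forall>x. (\<forall>j<n. 0 \<le> x j \<and> x j < int (q j)) \<and> (\<forall>j\<ge>n. x j = 0) \<longrightarrow> polyfract_eval n P x = f x)"
proof -
  have tor: "zsmult (int p ^ k) b = 0" for b :: 'b
    using nsmult_card_UNIV[of b] card by (metis of_nat_power zsmult_of_nat)
  define F where "F x = f (\<lambda>j. if j < n then x j mod int (q j) else 0)" for x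
  have F: "coord_periodic n q F"
    unfolding coord_periodic_def F_def by (auto intro!: arg_cong[where f = f])
  obtain P where P: "is_polyfract n P" "\<And>x. polyfract_eval n P x = F x"
    using coord_periodic_is_polyfract[OF p tor q F] by blast
  have "F x = f x" if "\<forall>j<n. 0 \<le> x j \<and> x j < int (q j)" "\<forall>j\<ge>n. x j = 0" for x
    unfolding F_def using that by (intro arg_cong[where f = f]) (auto simp: fun_eq_iff not_less)
  with P F show ?thesis unfolding coord_periodic_def by auto
qed

theorem corollary3p7:
  fixes p :: nat
  assumes "prime p"
  shows "(\<forall>(\<alpha>::nat) (\<beta>::nat) (f::int \<Rightarrow> int). \<alpha> \<ge> 1 \<longrightarrow> \<beta> \<ge> 1 \<longrightarrow>
            (\<forall>x. f (x + int p ^ \<alpha>) mod int p ^ \<beta> = f x mod int p ^ \<beta>) \<longrightarrow>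
            (\<exists>(c::nat \<Rightarrow> int) N. \<forall>x.
                (\<Sum>\<delta><N. c \<delta> * ibinom x \<delta>) mod int p ^ \<beta> = f x mod int p ^ \<beta>))
       \<and> (\<forall>(n::nat) (q::nat \<Rightarrow> nat) (f::(nat \<Rightarrow> int) \<Rightarrow> 'b::{ab_group_add,finite}).
            (\<exists>k. card (UNIV :: 'b set) = p ^ k) \<longrightarrow>
            (\<forall>j<n. q j \<ge> p \<and> (\<exists>e. q j = p ^ e)) \<longrightarrow>
            (\<exists>P :: (nat \<Rightarrow> nat) \<Rightarrow> 'b. is_polyfract n P
               \<and> (\<forall>x j. j < n \<longrightarrow> polyfract_eval n P (x(j := x j + int (q j))) = polyfract_eval n P x)
               \<and> (\<forall>x. (\<forall>j<n. 0 \<le> x j \<and> x j < int (q j)) \<and> (\<forall>j\<ge>n. x j = 0)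
                      \<longrightarrow> polyfract_eval n P x = f x)))"
proof (intro conjI allI impI)
  fix \<alpha> \<beta> :: nat and f :: "int \<Rightarrow> int"
  assume per: "\<forall>x. f (x + int p ^ \<alpha>) mod int p ^ \<beta> = f x mod int p ^ \<beta>"
  show "\<exists>(c::nat \<Rightarrow> int) N. \<forall>x. (\<Sum>\<delta><N. c \<delta> * ibinom x \<delta>) mod int p ^ \<beta> = f x mod int p ^ \<beta>"
  proof (intro exI)
    show "\<forall>x. (\<Sum>\<delta><\<beta> * p ^ \<alpha>. fwd_diff \<delta> f 0 * ibinom x \<delta>) mod int p ^ \<beta> = f x mod int p ^ \<beta>"
      using newton_interp_mod_prime_power[OF assms, of f \<alpha> \<beta>] per by blast
  qed
next
  fix n :: nat and q :: "nat \<Rightarrow> nat" and f :: "(nat \<Rightarrow> int) \<Rightarrow> 'b"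
  assume "\<exists>k. card (UNIV :: 'b set) = p ^ k" and q: "\<forall>j<n. q j \<ge> p \<and> (\<exists>e. q j = p ^ e)"
  then obtain k where k: "card (UNIV :: 'b set) = p ^ k" by blast
  show "\<exists>P. is_polyfract n P
      \<and> (\<forall>x j. j < n \<longrightarrow> polyfract_eval n P (x(j := x j + int (q j))) = polyfract_eval n P x)
      \<and> (\<forall>x. (\<forall>j<n. 0 \<le> x j \<and> x j < int (q j)) \<and> (\<forall>j\<ge>n. x j = 0) \<longrightarrow> polyfract_eval n P x = f x)"
    using q by (intro finite_p_group_map_is_polyfract[OF assms k]) blast
qed

end
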